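(* In a search game (as defined in the context), $U_{\mathrm{opt}}=\max_{f\in F_C}\sum_{\omega\in\Omega}f(\omega)\mu(\omega)v_{\mathfrak{s}}(\omega)=\max_{f\in F_F}\sum_{\omega\in\Omega}f(\omega)\mu(\omega)v_{\mathfrak{s}}(\omega)$, where $F_C$ is the set of compatible mixed outcomes and $F_F$ is the set of mixed outcomes generated by fractional allocations.
   Context: A search game has a finite set of players $N=\{1,\ldots,n\}$, a finite set $\Omega$ of locations, for each player $i$ a partition $\Pi_i$ of $\Omega$ (with $\pi_i(\omega)$ the cell containing $\omega$), a capacity $K_i\in\mathbb{N}$, a prior $\mu\in\Delta(\Omega)$, and social values $v_{\mathfrak{s}}(\omega)\ge0$ (other ingredients are irrelevant here). A pure strategy $s_i$ assigns to each cell $\pi_i\in\Pi_i$ a subset $s_i(\pi_i)\subseteq\pi_i$ with at most $K_i$ elements; $S$ is the set of pure profiles, and $m_s(\omega)=\sum_{i\in N}\mathbf{1}_{\omega\in s_i(\pi_i(\omega))}$. The social payoff is $U(s)=\sum_{\omega}\mu(\omega)v_{\mathfrak{s}}(\omega)\mathbf{1}_{m_s(\omega)\ge1}$ and $U_{\mathrm{opt}}=\max_{s\in S}U(s)$. A mixed outcome is a function $f:\Omega\to[0,1]$; it is compatible if for every $W\subseteq\Omega$: $\sum_{\omega\in W}f(\omega)\le\sum_{i\in N}K_i\cdot|\{\pi_i\in\Pi_i:\pi_i\cap W\ne\emptyset\}|$. A fractional allocation $\alpha=(\alpha_1,\ldots,\alpha_n)$ specifies $\alpha_i(\pi_i,\omega)\ge0$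 for every player $i$, cell $\pi_i\in\Pi_i$ and $\omega\in\pi_i$, with $\sum_{\omega\in\pi_i}\alpha_i(\pi_i,\omega)\le K_i$ for every cell; it generates $f_\alpha(\omega)=\min\big(1,\sum_{i\in N}\alpha_i(\pi_i(\omega),\omega)\big)$. *)

theory Defs
  imports Complex_Main "HOL-Library.Disjoint_Sets"
begin

definition cell :: "'w set set \<Rightarrow> 'w \<Rightarrow> 'w set" where
  "cell Q w = (THE c. c \<in> Q \<and> w \<in> c)"

definition search_game ::
  "'i set \<Rightarrow> 'w set \<Rightarrow> ('i \<Rightarrow> 'w set set) \<Rightarrow> ('i \<Rightarrow> nat) \<Rightarrow> ('w \<Rightarrow> real) \<Rightarrow> ('w \<Rightarrow> real) \<Rightarrow> bool"
  where
  "search_game N Omega P K mu v \<longleftrightarrow>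
     finite N \<and> finite Omega \<and> (\<forall>i\<in>N. partition_on Omega (P i)) \<and>
     (\<forall>w\<in>Omega. 0 \<le> mu w) \<and> sum mu Omega = 1 \<and> (\<forall>w\<in>Omega. 0 \<le> v w)"

text \<open>Pure strategy profile: s i c is the subset searched by player i in cell c.\<close>
definition pure_profile ::
  "'i set \<Rightarrow> ('i \<Rightarrow> 'w set set) \<Rightarrow> ('i \<Rightarrow> nat) \<Rightarrow> ('i \<Rightarrow> 'w set \<Rightarrow> 'w set) \<Rightarrow> bool" where
  "pure_profile N P K s \<longleftrightarrow> (\<forall>i\<in>N. \<forall>c\<in>P i. s i c \<subseteq> c \<and> card (s i c) \<le> K i)"

definition m_s :: "'i set \<Rightarrow> ('i \<Rightarrow> 'w set set) \<Rightarrow> ('i \<Rightarrow> 'w set \<Rightarrow> 'w set) \<Rightarrow> 'w \<Rightarrow> nat" where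
  "m_s N P s w = card {i\<in>N. w \<in> s i (cell (P i) w)}"

definition social_payoff ::
  "'i set \<Rightarrow> 'w set \<Rightarrow> ('i \<Rightarrow> 'w set set) \<Rightarrow> ('w \<Rightarrow> real) \<Rightarrow> ('w \<Rightarrow> real) \<Rightarrow> ('i \<Rightarrow> 'w set \<Rightarrow> 'w set) \<Rightarrow> real" where
  "social_payoff N Omega P mu v s = (\<Sum>w\<in>Omega. mu w * v w * (if 1 \<le> m_s N P s w then 1 else 0))"

definition U_opt ::
  "'i set \<Rightarrow> 'w set \<Rightarrow> ('i \<Rightarrow> 'w set set) \<Rightarrow> ('i \<Rightarrow> nat) \<Rightarrow> ('w \<Rightarrow> real) \<Rightarrow> ('w \<Rightarrow> real) \<Rightarrow> real" where
  "U_opt N Omega P K mu v = Max {social_payoff N Omega P mu v s | s. pure_profile N P K s}"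

definition mixed_outcome :: "'w set \<Rightarrow> ('w \<Rightarrow> real) \<Rightarrow> bool" where
  "mixed_outcome Omega f \<longleftrightarrow> (\<forall>w\<in>Omega. 0 \<le> f w \<and> f w \<le> 1)"

definition compatible ::
  "'i set \<Rightarrow> 'w set \<Rightarrow> ('i \<Rightarrow> 'w set set) \<Rightarrow> ('i \<Rightarrow> nat) \<Rightarrow> ('w \<Rightarrow> real) \<Rightarrow> bool" where
  "compatible N Omega P K f \<longleftrightarrow> mixed_outcome Omega f \<and>
     (\<forall>W. W \<subseteq> Omega \<longrightarrow>
        sum f W \<le> (\<Sum>i\<in>N. real (K i) * real (card {c\<in>P i. c \<inter> W \<noteq> {}})))"

definition frac_alloc ::
  "'i set \<Rightarrow> ('i \<Rightarrow> 'w set set) \<Rightarrow> ('i \<Rightarrow> nat) \<Rightarrow> ('i \<Rightarrow> 'w set \<Rightarrow> 'w \<Rightarrow> real) \<Rightarrow> bool" where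
  "frac_alloc N P K alpha \<longleftrightarrow>
     (\<forall>i\<in>N. \<forall>c\<in>P i. (\<forall>w\<in>c. 0 \<le> alpha i c w) \<and> (\<Sum>w\<in>c. alpha i c w) \<le> real (K i))"

definition f_alpha ::
  "'i set \<Rightarrow> ('i \<Rightarrow> 'w set set) \<Rightarrow> ('i \<Rightarrow> 'w set \<Rightarrow> 'w \<Rightarrow> real) \<Rightarrow> 'w \<Rightarrow> real" where
  "f_alpha N P alpha w = min 1 (\<Sum>i\<in>N. alpha i (cell (P i) w) w)"

definition F_C ::
  "'i set \<Rightarrow> 'w set \<Rightarrow> ('i \<Rightarrow> 'w set set) \<Rightarrow> ('i \<Rightarrow> nat) \<Rightarrow> ('w \<Rightarrow> real) set" where
  "F_C N Omega P K = {f. compatible N Omega P K f}"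

definition F_F ::
  "'i set \<Rightarrow> ('i \<Rightarrow> 'w set set) \<Rightarrow> ('i \<Rightarrow> nat) \<Rightarrow> ('w \<Rightarrow> real) set" where
  "F_F N P K = {f_alpha N P alpha | alpha. frac_alloc N P K alpha}"

definition outcome_value :: "'w set \<Rightarrow> ('w \<Rightarrow> real) \<Rightarrow> ('w \<Rightarrow> real) \<Rightarrow> ('w \<Rightarrow> real) \<Rightarrow> real" where
  "outcome_value Omega mu v f = (\<Sum>w\<in>Omega. f w * mu w * v w)"

definition is_max_over :: "'a set \<Rightarrow> ('a \<Rightarrow> real) \<Rightarrow> real \<Rightarrow> bool" where
  "is_max_over A g x \<longleftrightarrow> (\<exists>a\<in>A. g a = x) \<and> (\<forall>a\<in>A. g a \<le> x)"

end

theory Submission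
  imports Defs
begin

(* A compatible outcome f satisfies f(W) \<le> \<rho>(W), where \<rho>(W) (neighbour_capacity) is the total
   capacity of the (player, cell) pairs meeting W: f lies in the independence polytope of the transversal
   matroid whose independent sets are the sets of locations that can be assigned to such pairs
   within their capacities. The deficiency form of Hall's theorem gives f(T) \<le> |X| for every
   maximal independent X \<subseteq> T, and the greedy algorithm, adding locations in decreasing order
   of \<mu> v, turns this into \<Sum> f \<mu> v \<le> (\<mu> v)(X) for some independent X. An independent set is
   searched by a pure profile, so no compatible outcome beats U_opt. Conversely a pure profile
   is a 0/1 fractional allocation and fractional allocations are compatible, so the optimum is
   attained in F_F \<subseteq> F_C. *)

(* Slots c \<in> C (in the game: pairs (player, cell)) with admissible locations A c and
   capacities k c; \<sigma> sends each location of X to a slot admitting it. *)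
definition assignment :: "'c set \<Rightarrow> ('c \<Rightarrow> 'w set) \<Rightarrow> ('c \<Rightarrow> nat) \<Rightarrow> 'w set \<Rightarrow> ('w \<Rightarrow> 'c) \<Rightarrow> bool"
  where "assignment C A k X \<sigma> \<longleftrightarrow>
    (\<forall>x\<in>X. \<sigma> x \<in> C \<and> x \<in> A (\<sigma> x)) \<and> (\<forall>c\<in>C. card {x\<in>X. \<sigma> x = c} \<le> k c)"

definition matchable :: "'c set \<Rightarrow> ('c \<Rightarrow> 'w set) \<Rightarrow> ('c \<Rightarrow> nat) \<Rightarrow> 'w set \<Rightarrow> bool"
  where "matchable C A k X \<longleftrightarrow> (\<exists>\<sigma>. assignment C A k X \<sigma>)"

definition maximal_matchable ::
  "'c set \<Rightarrow> ('c \<Rightarrow> 'w set) \<Rightarrow> ('c \<Rightarrow> nat) \<Rightarrow> 'w set \<Rightarrow> 'w set \<Rightarrow> bool"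
  where "maximal_matchable C A k T X \<longleftrightarrow>
    X \<subseteq> T \<and> matchable C A k X \<and> (\<forall>y\<in>T - X. \<not> matchable C A k (insert y X))"

definition neighbours :: "'c set \<Rightarrow> ('c \<Rightarrow> 'w set) \<Rightarrow> 'w set \<Rightarrow> 'c set"
  where "neighbours C A Z = {c\<in>C. A c \<inter> Z \<noteq> {}}"

definition neighbour_capacity :: "'c set \<Rightarrow> ('c \<Rightarrow> 'w set) \<Rightarrow> ('c \<Rightarrow> nat) \<Rightarrow> 'w set \<Rightarrow> nat"
  where "neighbour_capacity C A k Z = sum k (neighbours C A Z)"

lemma assignment_restrict:
  assumes "assignment C A k X \<sigma>" "finite X" "Y \<subseteq> X" "C' \<subseteq> C" "\<sigma> ` Y \<subseteq> C'"
  shows "assignment C' A k Y \<sigma>"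
proof -
  have "card {y\<in>Y. \<sigma> y = c} \<le> card {x\<in>X. \<sigma> x = c}" for c
    using assms(2,3) by (intro card_mono) auto
  then show ?thesis
    using assms unfolding assignment_def by (meson image_subset_iff order_trans subsetD)
qed

lemma matchable_subset:
  assumes "matchable C A k X" "finite X" "Y \<subseteq> X"
  shows "matchable C A k Y"
  using assms assignment_restrict[of C A k X _ Y C]
  unfolding matchable_def assignment_def by blast

lemma assignment_insert:
  assumes "assignment C A k X \<sigma>" "finite X" "u \<notin> X" "c \<in> C" "u \<in> A c"
    "card {x\<in>X. \<sigma> x = c} < k c"
  shows "assignment C A k (insert u X) (\<sigma>(u := c))"
proof -
  have "{x \<in> insert u X. (\<sigma>(u := c)) x = c'} =
      (if c' = c then insert u {x\<in>X. \<sigma> x = c} else {x\<in>X. \<sigma> x = c'})" for c'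
    using assms(3) by auto
  then show ?thesis
    using assms unfolding assignment_def by (auto simp: Suc_le_eq)
qed

lemma assignment_exchange:
  assumes "assignment C A k X \<sigma>" "finite X" "y \<in> X" "u \<notin> X" "u \<in> A (\<sigma> y)"
  shows "assignment C A k (insert u (X - {y})) (\<sigma>(u := \<sigma> y))"
proof -
  define S where "S = {x\<in>X. \<sigma> x = \<sigma> y}"
  have "{x \<in> insert u (X - {y}). (\<sigma>(u := \<sigma> y)) x = c} =
      (if c = \<sigma> y then insert u (S - {y}) else {x\<in>X. \<sigma> x = c})" for c
    using assms(3,4) unfolding S_def by auto
  moreover have "card (insert u (S - {y})) = card S"
    using assms(2-4) card.remove[of S y] unfolding S_def by simp
  ultimately show ?thesis
    using assms unfolding assignment_def S_def by auto
qed

lemma assignment_Un: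
  assumes "assignment C1 A k X1 \<sigma>1" "assignment C2 A k X2 \<sigma>2" "X1 \<inter> X2 = {}" "C1 \<inter> C2 = {}"
  shows "assignment (C1 \<union> C2) A k (X1 \<union> X2) (\<lambda>x. if x \<in> X1 then \<sigma>1 x else \<sigma>2 x)"
  unfolding assignment_def
proof (intro conjI ballI)
  let ?\<tau> = "\<lambda>x. if x \<in> X1 then \<sigma>1 x else \<sigma>2 x"
  fix c assume "c \<in> C1 \<union> C2"
  then consider "c \<in> C1" | "c \<in> C2" by blast
  then show "card {x \<in> X1 \<union> X2. ?\<tau> x = c} \<le> k c"
  proof cases
    case 1
    then have "{x \<in> X1 \<union> X2. ?\<tau> x = c} = {x\<in>X1. \<sigma>1 x = c}"
      using assms unfolding assignment_def by (auto simp: disjoint_iff)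
    then show ?thesis using 1 assms(1) unfolding assignment_def by metis
  next
    case 2
    then have "{x \<in> X1 \<union> X2. ?\<tau> x = c} = {x\<in>X2. \<sigma>2 x = c}"
      using assms unfolding assignment_def by (auto simp: disjoint_iff)
    then show ?thesis using 2 assms(2) unfolding assignment_def by metis
  qed
qed (use assms in \<open>auto simp: assignment_def\<close>)

lemma saturated_if_unaugmentable:
  assumes "assignment C A k X \<sigma>" "finite X" "c \<in> C" "u \<in> A c" "u \<notin> X"
    "\<not> matchable C A k (insert u X)"
  shows "card {x\<in>X. \<sigma> x = c} = k c"
proof (rule ccontr)
  assume "card {x\<in>X. \<sigma> x = c} \<noteq> k c"
  then have "card {x\<in>X. \<sigma> x = c} < k c"
    using assms(1,3) unfolding assignment_def by (simp add: order_less_le)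
  then show False
    using assignment_insert[OF assms(1,2,5,3,4)] assms(6) unfolding matchable_def by blast
qed

lemma matchable_insert_by_rerouting:
  assumes \<sigma>: "assignment C A k X \<sigma>" and "finite X" "C0 \<subseteq> C" "y \<in> X" "\<sigma> y \<in> C0"
    "u \<notin> X" "u \<in> A (\<sigma> y)"
    and rest: "matchable (C - C0) A k (insert y {x\<in>X. \<sigma> x \<notin> C0})"
  shows "matchable C A k (insert u X)"
proof -
  let ?X1 = "{x\<in>X. \<sigma> x \<in> C0}" and ?X2 = "insert y {x\<in>X. \<sigma> x \<notin> C0}"
  have "assignment C0 A k ?X1 \<sigma>"
    by (rule assignment_restrict[OF \<sigma> assms(2)]) (use assms(3) in auto)
  then have \<sigma>1: "assignment C0 A k (insert u (?X1 - {y})) (\<sigma>(u := \<sigma> y))"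
    using assignment_exchange[of C0 A k ?X1 \<sigma> y u] assms(2,4-7) by auto
  obtain \<sigma>2 where \<sigma>2: "assignment (C - C0) A k ?X2 \<sigma>2"
    using rest unfolding matchable_def by blast
  have "insert u (?X1 - {y}) \<union> ?X2 = insert u X" "C0 \<union> (C - C0) = C"
    using assms(3-5) by auto
  moreover have "insert u (?X1 - {y}) \<inter> ?X2 = {}"
    using assms(4,6) by auto
  ultimately show ?thesis
    using assignment_Un[OF \<sigma>1 \<sigma>2] unfolding matchable_def by (metis Diff_disjoint)
qed

lemma neighbour_capacity_Un:
  assumes "finite C"
  shows "neighbour_capacity C A k (U \<union> Z) =
    neighbour_capacity C A k U + neighbour_capacity (C - neighbours C A U) A k Z"
proof -
  have split: "neighbours C A (U \<union> Z) = neighbours C A U \<union> neighbours (C - neighbours C A U) A Z"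
    unfolding neighbours_def by auto
  show ?thesis
    unfolding neighbour_capacity_def split
    by (rule sum.union_disjoint) (use assms in \<open>auto simp: neighbours_def\<close>)
qed

lemma neighbour_capacity_eq_card_if_unaugmentable:
  assumes \<sigma>: "assignment C A k X \<sigma>" and "finite X" "finite C" "X \<inter> U = {}"
    and stuck: "\<forall>u\<in>U. \<not> matchable C A k (insert u X)"
  shows "neighbour_capacity C A k U = card {x\<in>X. \<sigma> x \<in> neighbours C A U}"
proof -
  have "{x\<in>X. \<sigma> x \<in> neighbours C A U} = (\<Union>c\<in>neighbours C A U. {x\<in>X. \<sigma> x = c})"
    by auto
  then have "card {x\<in>X. \<sigma> x \<in> neighbours C A U} = (\<Sum>c\<in>neighbours C A U. card {x\<in>X. \<sigma> x = c})"
    using assms(2,3) by (simp only:) (rule card_UN_disjoint, auto simp: neighbours_def)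
  also have "\<dots> = neighbour_capacity C A k U"
    unfolding neighbour_capacity_def
  proof (rule sum.cong[OF refl])
    fix c assume "c \<in> neighbours C A U"
    then obtain u where "u \<in> U" "u \<in> A c" "c \<in> C" unfolding neighbours_def by auto
    then show "card {x\<in>X. \<sigma> x = c} = k c"
      using saturated_if_unaugmentable[OF \<sigma> assms(2)] assms(4) stuck by blast
  qed
  finally show ?thesis ..
qed

lemma unaugmentable_without_neighbours:
  assumes \<sigma>: "assignment C A k X \<sigma>" and "finite X" "X \<inter> U = {}"
    and stuck: "\<forall>u\<in>U. \<not> matchable C A k (insert u X)"
    and y: "y \<in> X" "\<sigma> y \<in> neighbours C A U"
  shows "\<not> matchable (C - neighbours C A U) A k (insert y {x\<in>X. \<sigma> x \<notin> neighbours C A U})"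
proof
  assume "matchable (C - neighbours C A U) A k (insert y {x\<in>X. \<sigma> x \<notin> neighbours C A U})"
  moreover obtain u where "u \<in> U" "u \<in> A (\<sigma> y)"
    using y unfolding neighbours_def by auto
  moreover have "neighbours C A U \<subseteq> C" "u \<notin> X"
    using \<open>u \<in> U\<close> assms(3) unfolding neighbours_def by auto
  ultimately have "matchable C A k (insert u X)"
    using matchable_insert_by_rerouting[OF \<sigma> assms(2)] y by blast
  then show False using stuck \<open>u \<in> U\<close> by blast
qed

(* Induction on |X|: the slots adjacent to U are saturated, and the locations filling them
   take the place of U in a smaller instance without those slots. *)
lemma tight_set_if_unaugmentable:
  assumes "finite X" "finite C" "assignment C A k X \<sigma>" "X \<inter> U = {}"
    "\<forall>u\<in>U. \<not> matchable C A k (insert u X)"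
  shows "\<exists>Z. U \<subseteq> Z \<and> Z \<subseteq> X \<union> U \<and> neighbour_capacity C A k Z \<le> card (X \<inter> Z)"
  using assms
proof (induction "card X" arbitrary: X U C \<sigma> rule: less_induct)
  case less
  note fin = less.prems(1,2) and \<sigma> = less.prems(3) and disj = less.prems(4)
  define C0 where "C0 = neighbours C A U"
  define X1 where "X1 = {x\<in>X. \<sigma> x \<in> C0}"
  define X' where "X' = {x\<in>X. \<sigma> x \<notin> C0}"
  have cap_U: "neighbour_capacity C A k U = card X1"
    unfolding X1_def C0_def by (rule neighbour_capacity_eq_card_if_unaugmentable[OF \<sigma> fin disj less.prems(5)])
  show ?case
  proof (cases "X1 = {}")
    case True
    then show ?thesis using cap_U by (intro exI[of _ U]) auto
  next
    case False
    have X_split: "X = X1 \<union> X'" "X1 \<inter> X' = {}"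
      unfolding X1_def X'_def by auto
    have smaller: "card X' < card X"
      using False fin(1) unfolding X'_def X1_def by (intro psubset_card_mono) auto
    have \<sigma>': "assignment (C - C0) A k X' \<sigma>"
      by (rule assignment_restrict[OF \<sigma> fin(1)]) (use \<sigma> in \<open>auto simp: assignment_def X'_def\<close>)
    have stuck': "\<forall>y\<in>X1. \<not> matchable (C - C0) A k (insert y X')"
    proof
      fix y assume "y \<in> X1"
      then show "\<not> matchable (C - C0) A k (insert y X')"
        using unaugmentable_without_neighbours[OF \<sigma> fin(1) disj less.prems(5), of y]
        unfolding X1_def X'_def C0_def by simp
    qed
    have "finite X'" "finite (C - C0)" "X' \<inter> X1 = {}"
      using fin X_split by auto
    then obtain Z' where Z': "X1 \<subseteq> Z'" "Z' \<subseteq> X' \<union> X1"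
      "neighbour_capacity (C - C0) A k Z' \<le> card (X' \<inter> Z')"
      using less.hyps[OF smaller _ _ \<sigma>' _ stuck'] by blast
    have "neighbour_capacity C A k (U \<union> Z') = card X1 + neighbour_capacity (C - C0) A k Z'"
      unfolding C0_def neighbour_capacity_Un[OF fin(2)] cap_U ..
    also have "\<dots> \<le> card X1 + card (X' \<inter> Z')"
      using Z'(3) by simp
    also have "\<dots> = card (X \<inter> (U \<union> Z'))"
    proof -
      have "X \<inter> (U \<union> Z') = X1 \<union> (X' \<inter> Z')"
        using Z'(1) X_split disj by auto
      then show ?thesis
        using fin(1) X_split by (simp add: card_Un_disjoint disjoint_iff)
    qed
    finally show ?thesis
      using Z'(1,2) X_split by (intro exI[of _ "U \<union> Z'"]) auto
  qed
qed

lemma sum_le_card_if_maximal_matchable: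
  fixes f :: "'w \<Rightarrow> real"
  assumes "finite T" "finite C" "maximal_matchable C A k T X"
    and f_le_1: "\<forall>t\<in>T. f t \<le> 1"
    and f_le_cap: "\<forall>W\<subseteq>T. sum f W \<le> real (neighbour_capacity C A k W)"
  shows "sum f T \<le> real (card X)"
proof -
  obtain \<sigma> where \<sigma>: "assignment C A k X \<sigma>" and "X \<subseteq> T"
    and stuck: "\<forall>y\<in>T - X. \<not> matchable C A k (insert y X)"
    using assms(3) unfolding maximal_matchable_def matchable_def by blast
  have "finite X" using \<open>X \<subseteq> T\<close> assms(1) finite_subset by blast
  then obtain Z where Z: "T - X \<subseteq> Z" "Z \<subseteq> X \<union> (T - X)"
    "neighbour_capacity C A k Z \<le> card (X \<inter> Z)"
    using tight_set_if_unaugmentable[OF _ assms(2) \<sigma> _ stuck] by blast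
  have "Z \<subseteq> T" using Z \<open>X \<subseteq> T\<close> by auto
  have "sum f T = sum f Z + sum f (T - Z)"
    using sum.subset_diff[OF \<open>Z \<subseteq> T\<close> assms(1)] by (simp add: add.commute)
  also have "\<dots> \<le> real (card (X \<inter> Z)) + real (card (T - Z))"
  proof (rule add_mono)
    show "sum f Z \<le> card (X \<inter> Z)"
      using f_le_cap \<open>Z \<subseteq> T\<close> Z(3) by (meson of_nat_mono order_trans)
    show "sum f (T - Z) \<le> card (T - Z)"
      using f_le_1 sum_mono[of "T - Z" f "\<lambda>_. 1"] by simp
  qed
  also have "\<dots> \<le> real (card (X \<inter> Z)) + real (card (X - Z))"
  proof -
    have "T - Z \<subseteq> X - Z" using Z(1) by auto
    then show ?thesis using \<open>finite X\<close> by (simp add: card_mono)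
  qed
  also have "\<dots> = card X"
    using card_Int_Diff[OF \<open>finite X\<close>, of Z] by simp
  finally show ?thesis .
qed

lemma maximal_matchable_insert:
  assumes "maximal_matchable C A k S X" "finite S" "matchable C A k (insert m X)"
  shows "maximal_matchable C A k (insert m S) (insert m X)"
  unfolding maximal_matchable_def
proof (intro conjI ballI notI)
  have "X \<subseteq> S" "finite X"
    using assms(1,2) finite_subset unfolding maximal_matchable_def by auto
  then show "insert m X \<subseteq> insert m S" by auto
  show "matchable C A k (insert m X)" by fact
  fix y assume y: "y \<in> insert m S - insert m X"
    and "matchable C A k (insert y (insert m X))"
  then have "matchable C A k (insert y X)"
    using \<open>finite X\<close> by (elim matchable_subset) auto
  then show False using assms(1) y unfolding maximal_matchable_def by blast
qed

lemma maximal_matchable_insert_unmatchable: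
  assumes "maximal_matchable C A k S X" "\<not> matchable C A k (insert m X)"
  shows "maximal_matchable C A k (insert m S) X"
  using assms unfolding maximal_matchable_def by blast

lemma weighted_bound_at_lower_level:
  fixes f wt :: "'w \<Rightarrow> real"
  assumes "finite S" "m \<notin> S" "a \<le> wt m"
    and at_m: "(\<Sum>t\<in>S. f t * (wt t - wt m)) \<le> (\<Sum>x\<in>X. wt x - wt m)"
    and rank: "sum f (insert m S) \<le> card X"
  shows "(\<Sum>t\<in>insert m S. f t * (wt t - a)) \<le> (\<Sum>x\<in>X. wt x - a)"
proof -
  have "(\<Sum>t\<in>insert m S. f t * (wt t - a)) = (\<Sum>t\<in>insert m S. f t * (wt t - wt m) + (wt m - a) * f t)"
    by (rule sum.cong) (simp_all add: algebra_simps)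
  also have "\<dots> = (\<Sum>t\<in>S. f t * (wt t - wt m)) + (wt m - a) * sum f (insert m S)"
    using assms(1,2) by (simp add: sum.distrib sum_distrib_left distrib_left)
  also have "\<dots> \<le> (\<Sum>x\<in>X. wt x - wt m) + (wt m - a) * card X"
    using at_m rank assms(3) by (intro add_mono mult_left_mono) auto
  also have "\<dots> = (\<Sum>x\<in>X. wt x - a)"
    by (simp add: sum_subtractf algebra_simps)
  finally show ?thesis .
qed

(* Greedy algorithm in inductive form: the element m of least weight is processed last, and
   the bound is kept for every level a below the weights so that the induction hypothesis can
   be used at level wt m. *)
lemma greedy_maximal_matchable:
  fixes f wt :: "'w \<Rightarrow> real"
  assumes "finite T" "finite C" "\<forall>t\<in>T. f t \<le> 1"
    "\<forall>W\<subseteq>T. sum f W \<le> real (neighbour_capacity C A k W)"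
  shows "\<exists>X. maximal_matchable C A k T X \<and>
    (\<forall>a. (\<forall>t\<in>T. a \<le> wt t) \<longrightarrow> (\<Sum>t\<in>T. f t * (wt t - a)) \<le> (\<Sum>x\<in>X. wt x - a))"
  using assms
proof (induction T rule: finite_ranking_induct[where f = "\<lambda>t. - wt t"])
  case empty
  show ?case
    by (intro exI[of _ "{}"]) (simp add: maximal_matchable_def matchable_def assignment_def)
next
  case (insert m S)
  show ?case
  proof (cases "m \<in> S")
    case True
    then show ?thesis using insert by (simp add: insert_absorb)
  next
    case m_new: False
    have "\<forall>t\<in>S. f t \<le> 1" "\<forall>W\<subseteq>S. sum f W \<le> real (neighbour_capacity C A k W)"
      using insert.prems(2,3) by auto
    then obtain X' where X': "maximal_matchable C A k S X'" and ineq: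
      "\<And>a. \<forall>t\<in>S. a \<le> wt t \<Longrightarrow> (\<Sum>t\<in>S. f t * (wt t - a)) \<le> (\<Sum>x\<in>X'. wt x - a)"
      using insert.IH insert.prems(1) by blast
    have "m \<notin> X'" "finite X'"
      using X' m_new insert.hyps(1) finite_subset unfolding maximal_matchable_def by auto
    show ?thesis
    proof (cases "matchable C A k (insert m X')")
      case True
      have "(\<Sum>t\<in>insert m S. f t * (wt t - a)) \<le> (\<Sum>x\<in>insert m X'. wt x - a)"
        if "\<forall>t\<in>insert m S. a \<le> wt t" for a
      proof -
        have "f m * (wt m - a) \<le> wt m - a"
          using that insert.prems(2) mult_right_mono[of "f m" 1 "wt m - a"] by simp
        then show ?thesis
          using ineq[of a] that m_new \<open>m \<notin> X'\<close> \<open>finite X'\<close> insert.hyps(1) by simp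
      qed
      then show ?thesis
        using maximal_matchable_insert[OF X' insert.hyps(1) True] by blast
    next
      case False
      have max: "maximal_matchable C A k (insert m S) X'"
        using maximal_matchable_insert_unmatchable[OF X' False] .
      have rank: "sum f (insert m S) \<le> card X'"
        using sum_le_card_if_maximal_matchable[OF _ insert.prems(1) max] insert.hyps(1) insert.prems(2,3)
        by blast
      have "(\<Sum>t\<in>insert m S. f t * (wt t - a)) \<le> (\<Sum>x\<in>X'. wt x - a)"
        if "\<forall>t\<in>insert m S. a \<le> wt t" for a
        by (rule weighted_bound_at_lower_level[OF insert.hyps(1) m_new _ _ rank])
          (use that ineq insert.hyps(2) in auto)
      then show ?thesis using max by blast
    qed
  qed
qed

lemma weighted_sum_le_matchable:
  fixes f wt :: "'w \<Rightarrow> real"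
  assumes "finite T" "finite C" "\<forall>t\<in>T. f t \<le> 1"
    "\<forall>W\<subseteq>T. sum f W \<le> real (neighbour_capacity C A k W)" "\<forall>t\<in>T. 0 \<le> wt t"
  shows "\<exists>X\<subseteq>T. matchable C A k X \<and> (\<Sum>t\<in>T. f t * wt t) \<le> sum wt X"
proof -
  obtain X where "maximal_matchable C A k T X"
    and "(\<Sum>t\<in>T. f t * (wt t - 0)) \<le> (\<Sum>x\<in>X. wt x - 0)"
    using greedy_maximal_matchable[OF assms(1-4), of wt] assms(5) by blast
  then show ?thesis unfolding maximal_matchable_def by auto
qed

lemma cell_eqI:
  assumes "partition_on Omega Q" "c \<in> Q" "w \<in> c"
  shows "cell Q w = c"
  unfolding cell_def
proof (rule the_equality)
  show "c \<in> Q \<and> w \<in> c" using assms by auto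
  fix c' assume "c' \<in> Q \<and> w \<in> c'"
  then show "c' = c"
    using partition_onD2[OF assms(1)] assms(2,3) by (meson disjointD disjoint_iff)
qed

lemma cell_in_partition:
  assumes "partition_on Omega Q" "w \<in> Omega"
  shows "cell Q w \<in> Q" "w \<in> cell Q w"
proof -
  obtain c where "c \<in> Q" "w \<in> c"
    using partition_onD1[OF assms(1)] assms(2) by auto
  then show "cell Q w \<in> Q" "w \<in> cell Q w"
    using cell_eqI[OF assms(1)] by auto
qed

lemma search_gameD:
  assumes "search_game N Omega P K mu v"
  shows "finite N" "finite Omega" "\<And>i. i \<in> N \<Longrightarrow> partition_on Omega (P i)"
    "\<And>i. i \<in> N \<Longrightarrow> finite (P i)" "\<And>i c. i \<in> N \<Longrightarrow> c \<in> P i \<Longrightarrow> c \<subseteq> Omega"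
    "\<And>w. w \<in> Omega \<Longrightarrow> 0 \<le> mu w * v w"
proof -
  show fin: "finite N" "finite Omega" and part: "\<And>i. i \<in> N \<Longrightarrow> partition_on Omega (P i)"
    using assms unfolding search_game_def by auto
  show "\<And>i. i \<in> N \<Longrightarrow> finite (P i)" using fin part finite_elements by blast
  show "\<And>i c. i \<in> N \<Longrightarrow> c \<in> P i \<Longrightarrow> c \<subseteq> Omega" using part partition_onD1 by blast
  show "\<And>w. w \<in> Omega \<Longrightarrow> 0 \<le> mu w * v w" using assms unfolding search_game_def by auto
qed

lemma neighbour_capacity_Sigma:
  assumes "finite N" "\<And>i. i \<in> N \<Longrightarrow> finite (P i)"
  shows "real (neighbour_capacity (Sigma N P) snd (\<lambda>p. K (fst p)) W) =
    (\<Sum>i\<in>N. real (K i) * real (card {c\<in>P i. c \<inter> W \<noteq> {}}))"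
proof -
  have "{p\<in>Sigma N P. snd p \<inter> W \<noteq> {}} = Sigma N (\<lambda>i. {c\<in>P i. c \<inter> W \<noteq> {}})"
    by auto
  then have "neighbour_capacity (Sigma N P) snd (\<lambda>p. K (fst p)) W =
      (\<Sum>i\<in>N. \<Sum>c\<in>{c\<in>P i. c \<inter> W \<noteq> {}}. K i)"
    unfolding neighbour_capacity_def neighbours_def
    using sum.Sigma[of N "\<lambda>i. {c\<in>P i. c \<inter> W \<noteq> {}}" "\<lambda>i c. K i"] assms
    by (simp add: split_def)
  then show ?thesis by (simp add: mult.commute)
qed

lemma social_payoff_eq_sum_covered:
  assumes "finite Omega"
  shows "social_payoff N Omega P mu v s = (\<Sum>w\<in>{w\<in>Omega. 1 \<le> m_s N P s w}. mu w * v w)"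
  unfolding social_payoff_def using assms
  by (simp add: sum.inter_filter if_distrib cong: if_cong)

lemma social_payoff_finite_nonempty:
  assumes "finite Omega"
  shows "finite {social_payoff N Omega P mu v s | s. pure_profile N P K s}"
    "{social_payoff N Omega P mu v s | s. pure_profile N P K s} \<noteq> {}"
proof -
  have "{social_payoff N Omega P mu v s | s. pure_profile N P K s} \<subseteq>
      (\<lambda>S. \<Sum>w\<in>S. mu w * v w) ` Pow Omega"
    using social_payoff_eq_sum_covered[OF assms] by blast
  then show "finite {social_payoff N Omega P mu v s | s. pure_profile N P K s}"
    using assms by (meson finite_Pow_iff finite_imageI finite_subset)
  have "pure_profile N P K (\<lambda>i c. {})" unfolding pure_profile_def by simp
  then show "{social_payoff N Omega P mu v s | s. pure_profile N P K s} \<noteq> {}" by blast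
qed

lemma social_payoff_le_U_opt:
  assumes "finite Omega" "pure_profile N P K s"
  shows "social_payoff N Omega P mu v s \<le> U_opt N Omega P K mu v"
  unfolding U_opt_def using social_payoff_finite_nonempty[OF assms(1)] assms(2)
  by (intro Max_ge) auto

lemma U_opt_attained:
  assumes "finite Omega"
  obtains s where "pure_profile N P K s" "social_payoff N Omega P mu v s = U_opt N Omega P K mu v"
proof -
  have "U_opt N Omega P K mu v \<in> {social_payoff N Omega P mu v s | s. pure_profile N P K s}"
    unfolding U_opt_def using social_payoff_finite_nonempty[OF assms] by (rule Max_in)
  then show ?thesis using that by auto
qed

lemma pure_profile_covering_matchable:
  assumes "search_game N Omega P K mu v"
    and "matchable (Sigma N P) snd (\<lambda>p. K (fst p)) X"
  obtains s where "pure_profile N P K s" "\<And>w. w \<in> X \<Longrightarrow> 1 \<le> m_s N P s w"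
proof -
  obtain \<sigma> where \<sigma>: "assignment (Sigma N P) snd (\<lambda>p. K (fst p)) X \<sigma>"
    using assms(2) unfolding matchable_def by blast
  define s where "s i c = {x\<in>X. \<sigma> x = (i, c)}" for i c
  have "pure_profile N P K s"
    using \<sigma> unfolding pure_profile_def assignment_def s_def by fastforce
  moreover have "1 \<le> m_s N P s w" if "w \<in> X" for w
  proof -
    have "\<sigma> w \<in> Sigma N P" "w \<in> snd (\<sigma> w)"
      using \<sigma> that unfolding assignment_def by auto
    then obtain i c where ic: "\<sigma> w = (i, c)" "i \<in> N" "c \<in> P i" "w \<in> c"
      by (cases "\<sigma> w") auto
    then have "cell (P i) w = c"
      using cell_eqI[OF search_gameD(3)[OF assms(1)]] by blast
    then have "i \<in> {i\<in>N. w \<in> s i (cell (P i) w)}"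
      using ic that unfolding s_def by auto
    then have "0 < card {i\<in>N. w \<in> s i (cell (P i) w)}"
      using search_gameD(1)[OF assms(1)] by (auto simp: card_gt_0_iff)
    then show ?thesis unfolding m_s_def by simp
  qed
  ultimately show ?thesis using that by blast
qed

lemma pure_profile_outcome_in_F_F:
  assumes "search_game N Omega P K mu v" "pure_profile N P K s"
  shows "\<exists>f\<in>F_F N P K. outcome_value Omega mu v f = social_payoff N Omega P mu v s"
proof -
  define \<alpha> where "\<alpha> i c w = (if w \<in> s i c then 1 else 0 :: real)" for i c w
  have "frac_alloc N P K \<alpha>"
    unfolding frac_alloc_def
  proof (intro ballI)
    fix i c assume i: "i \<in> N" and c: "c \<in> P i"
    have "finite c" "s i c \<subseteq> c" "card (s i c) \<le> K i"
      using search_gameD(2)[OF assms(1)] search_gameD(5)[OF assms(1) i c] finite_subset assms(2) i c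
      unfolding pure_profile_def by auto
    then have "(\<Sum>w\<in>c. \<alpha> i c w) \<le> real (K i)"
      unfolding \<alpha>_def by (simp add: sum.If_cases Int_absorb1)
    then show "(\<forall>w\<in>c. 0 \<le> \<alpha> i c w) \<and> (\<Sum>w\<in>c. \<alpha> i c w) \<le> real (K i)"
      unfolding \<alpha>_def by auto
  qed
  moreover have "f_alpha N P \<alpha> w = (if 1 \<le> m_s N P s w then 1 else 0)" for w
  proof -
    have "(\<Sum>i\<in>N. \<alpha> i (cell (P i) w) w) = real (m_s N P s w)"
      unfolding \<alpha>_def m_s_def using search_gameD(1)[OF assms(1)]
      by (simp add: sum.inter_filter[symmetric])
    then show ?thesis unfolding f_alpha_def by auto
  qed
  then have "outcome_value Omega mu v (f_alpha N P \<alpha>) = social_payoff N Omega P mu v s"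
    unfolding outcome_value_def social_payoff_def by (intro sum.cong) auto
  ultimately show ?thesis unfolding F_F_def by blast
qed

lemma sum_cell_alloc_le:
  fixes \<alpha> :: "'w set \<Rightarrow> 'w \<Rightarrow> real"
  assumes Q: "partition_on Omega Q" and "finite Omega" "W \<subseteq> Omega"
    and \<alpha>: "\<forall>c\<in>Q. (\<forall>w\<in>c. 0 \<le> \<alpha> c w) \<and> (\<Sum>w\<in>c. \<alpha> c w) \<le> K"
  shows "(\<Sum>w\<in>W. \<alpha> (cell Q w) w) \<le> K * card {c\<in>Q. c \<inter> W \<noteq> {}}"
proof -
  define QW where "QW = {c\<in>Q. c \<inter> W \<noteq> {}}"
  have "finite W" using assms(2,3) finite_subset by blast
  have "finite Q" using finite_elements[OF assms(2) Q] .
  have cells: "cell Q w \<in> QW" "w \<in> cell Q w" if "w \<in> W" for w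
  proof -
    show "w \<in> cell Q w" using cell_in_partition(2)[OF Q] that assms(3) by blast
    then show "cell Q w \<in> QW" using cell_in_partition(1)[OF Q] that assms(3) unfolding QW_def by blast
  qed
  have "(\<Sum>w\<in>W. \<alpha> (cell Q w) w) = (\<Sum>c\<in>QW. \<Sum>w\<in>{w\<in>W. cell Q w = c}. \<alpha> (cell Q w) w)"
  proof (rule sum.group[symmetric])
    show "finite W" "finite QW" using \<open>finite W\<close> \<open>finite Q\<close> unfolding QW_def by auto
    show "cell Q ` W \<subseteq> QW" using cells(1) by blast
  qed
  also have "\<dots> = (\<Sum>c\<in>QW. \<Sum>w\<in>c \<inter> W. \<alpha> c w)"
  proof (rule sum.cong[OF refl])
    fix c assume "c \<in> QW"
    then have "c \<in> Q" unfolding QW_def by blast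
    then have on_c: "cell Q w = c" if "w \<in> c" for w
      using cell_eqI[OF Q] that by blast
    show "(\<Sum>w\<in>{w\<in>W. cell Q w = c}. \<alpha> (cell Q w) w) = (\<Sum>w\<in>c \<inter> W. \<alpha> c w)"
    proof (rule sum.cong)
      show "{w\<in>W. cell Q w = c} = c \<inter> W"
        using cells(2) on_c by blast
      show "\<alpha> (cell Q w) w = \<alpha> c w" if "w \<in> c \<inter> W" for w
        using on_c that by simp
    qed
  qed
  also have "\<dots> \<le> (\<Sum>c\<in>QW. K)"
  proof (rule sum_mono)
    fix c assume c: "c \<in> QW"
    then have "c \<subseteq> Omega" using Q partition_onD1 unfolding QW_def by blast
    then have "finite c" using assms(2) finite_subset by blast
    then have "(\<Sum>w\<in>c \<inter> W. \<alpha> c w) \<le> (\<Sum>w\<in>c. \<alpha> c w)"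
      using c \<alpha> unfolding QW_def by (intro sum_mono2) auto
    also have "\<dots> \<le> K" using c \<alpha> unfolding QW_def by auto
    finally show "(\<Sum>w\<in>c \<inter> W. \<alpha> c w) \<le> K" .
  qed
  finally show ?thesis unfolding QW_def by (simp add: mult.commute)
qed

lemma F_F_subset_F_C:
  assumes "search_game N Omega P K mu v"
  shows "F_F N P K \<subseteq> F_C N Omega P K"
proof
  fix f assume "f \<in> F_F N P K"
  then obtain \<alpha> where \<alpha>: "frac_alloc N P K \<alpha>" and f: "f = f_alpha N P \<alpha>"
    unfolding F_F_def by blast
  note game = search_gameD[OF assms]
  have "0 \<le> \<alpha> i (cell (P i) w) w" if "i \<in> N" "w \<in> Omega" for i w
    using \<alpha> cell_in_partition[OF game(3)] that unfolding frac_alloc_def by blast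
  then have "mixed_outcome Omega f"
    unfolding mixed_outcome_def f f_alpha_def by (auto intro: sum_nonneg)
  moreover have "sum f W \<le> (\<Sum>i\<in>N. real (K i) * real (card {c\<in>P i. c \<inter> W \<noteq> {}}))"
    if "W \<subseteq> Omega" for W
  proof -
    have "sum f W \<le> (\<Sum>w\<in>W. \<Sum>i\<in>N. \<alpha> i (cell (P i) w) w)"
      by (rule sum_mono) (simp add: f f_alpha_def)
    also have "\<dots> = (\<Sum>i\<in>N. \<Sum>w\<in>W. \<alpha> i (cell (P i) w) w)"
      by (rule sum.swap)
    also have "\<dots> \<le> (\<Sum>i\<in>N. real (K i) * real (card {c\<in>P i. c \<inter> W \<noteq> {}}))"
      using sum_cell_alloc_le[OF game(3) game(2) that] \<alpha>
      unfolding frac_alloc_def by (intro sum_mono) auto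
    finally show ?thesis .
  qed
  ultimately show "f \<in> F_C N Omega P K"
    unfolding F_C_def compatible_def by blast
qed

lemma outcome_value_le_U_opt:
  assumes "search_game N Omega P K mu v" and "f \<in> F_C N Omega P K"
  shows "outcome_value Omega mu v f \<le> U_opt N Omega P K mu v"
proof -
  note game = search_gameD[OF assms(1)]
  have fin: "finite (Sigma N P)" using game(1,4) by auto
  have le_1: "\<forall>w\<in>Omega. f w \<le> 1"
    using assms(2) unfolding F_C_def compatible_def mixed_outcome_def by auto
  have le_cap: "\<forall>W\<subseteq>Omega. sum f W \<le> real (neighbour_capacity (Sigma N P) snd (\<lambda>p. K (fst p)) W)"
    using assms(2) neighbour_capacity_Sigma[where N = N and P = P, OF game(1,4)]
    unfolding F_C_def compatible_def by auto
  have nonneg: "\<forall>w\<in>Omega. 0 \<le> mu w * v w" using game(6) by blast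
  obtain X where X: "X \<subseteq> Omega" "matchable (Sigma N P) snd (\<lambda>p. K (fst p)) X"
    and le: "(\<Sum>w\<in>Omega. f w * (mu w * v w)) \<le> (\<Sum>w\<in>X. mu w * v w)"
    using weighted_sum_le_matchable[OF game(2) fin le_1 le_cap nonneg] by blast
  obtain s where s: "pure_profile N P K s" and covers: "\<And>w. w \<in> X \<Longrightarrow> 1 \<le> m_s N P s w"
    using pure_profile_covering_matchable[OF assms(1) X(2)] by blast
  have "outcome_value Omega mu v f = (\<Sum>w\<in>Omega. f w * (mu w * v w))"
    unfolding outcome_value_def by (simp add: mult.assoc)
  also have "\<dots> \<le> (\<Sum>w\<in>{w\<in>Omega. 1 \<le> m_s N P s w}. mu w * v w)"
  proof -
    have "X \<subseteq> {w\<in>Omega. 1 \<le> m_s N P s w}" using X(1) covers by auto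
    then have "(\<Sum>w\<in>X. mu w * v w) \<le> (\<Sum>w\<in>{w\<in>Omega. 1 \<le> m_s N P s w}. mu w * v w)"
      using game(2,6) by (intro sum_mono2) auto
    then show ?thesis using le by linarith
  qed
  also have "\<dots> = social_payoff N Omega P mu v s"
    by (rule social_payoff_eq_sum_covered[OF game(2), symmetric])
  also have "\<dots> \<le> U_opt N Omega P K mu v"
    using social_payoff_le_U_opt[OF game(2) s] .
  finally show ?thesis .
qed

theorem corollary3:
  fixes N :: "'i set" and Omega :: "'w set" and P :: "'i \<Rightarrow> 'w set set"
    and K :: "'i \<Rightarrow> nat" and mu v :: "'w \<Rightarrow> real"
  assumes "search_game N Omega P K mu v"
  shows "is_max_over (F_C N Omega P K) (outcome_value Omega mu v) (U_opt N Omega P K mu v)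
       \<and> is_max_over (F_F N P K) (outcome_value Omega mu v) (U_opt N Omega P K mu v)"
proof -
  obtain s where s: "pure_profile N P K s"
    and s_opt: "social_payoff N Omega P mu v s = U_opt N Omega P K mu v"
    using U_opt_attained[OF search_gameD(2)[OF assms]] by blast
  obtain f where "f \<in> F_F N P K" "outcome_value Omega mu v f = U_opt N Omega P K mu v"
    using pure_profile_outcome_in_F_F[OF assms s] unfolding s_opt by blast
  moreover have "F_F N P K \<subseteq> F_C N Omega P K"
    by (rule F_F_subset_F_C[OF assms])
  ultimately show ?thesis
    using outcome_value_le_U_opt[OF assms] unfolding is_max_over_def by blast
qed

end
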